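(* For every integer $n\ge0$, the number of walks $0=y_0,y_1,\dots,y_n=2$ with $y_i-y_{i-1}\in\{-2,-1,+1,+2\}$ for all $i$ and $y_i\ge1$ for all $1\le i\le n$ (basketball walks of length $n$ from the origin to altitude $2$ never returning to the $x$-axis) equals $$\frac{1}{2n+1}\sum_{k=0}^{n+1}(-1)^{n+k+1}\binom{2n+1}{n+k}\binom{n+2k-1}{k}.$$
   Context: For integers $a$ and $b$, $\binom ab=a(a-1)\cdots(a-b+1)/b!$ if $b\ge0$ (so $\binom{-1}{0}=1$) and $\binom ab=0$ if $b<0$. *)

theory Defs
  imports Complex_Main
begin

definition basketball_excursion_walks :: "nat \<Rightarrow> int list set" where
  "basketball_excursion_walks n =
     {ys. length ys = n + 1 \<and> ys ! 0 = 0 \<and> ys ! n = 2 \<and>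
          (\<forall>i\<in>{1..n}. ys ! i - ys ! (i - 1) \<in> {-2, -1, 1, 2}) \<and>
          (\<forall>i\<in>{1..n}. ys ! i \<ge> 1)}"

end

theory Submission
  imports Defs "HOL-Computational_Algebra.Formal_Power_Series"
begin

text \<open>A walk ending at altitude \<open>h \<ge> 1\<close> is a walk ending at \<open>h - d\<close> for some step
  \<open>d \<in> {-2, -1, 1, 2}\<close> followed by that step, so the generating functions \<open>W(h)\<close> of the walks
  satisfy \<open>W(h) = x (W(h-2) + W(h-1) + W(h+1) + W(h+2))\<close> for \<open>h \<ge> 1\<close>, with \<open>W(-1) = 0\<close>,
  \<open>W(0) = 1\<close>. Let \<open>\<phi>(u) = 1/(1 - u) - u\<close> and let \<open>E\<close> be the power series with
  \<open>E = x \<phi>(E)\<^sup>2\<close>. The solution is the sequence with \<open>W(h+1) = E/(1 - E) W(h) + E W(h-1)\<close>: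
  the defect of the step equation obeys the same two-term recurrence and vanishes for
  \<open>h = 1, 2\<close> by algebra. In particular \<open>x W(2) = 1 - 1/\<phi>(E)\<close>, so Lagrange inversion gives
  \<open>[x^n] W(2) = [x^(n+1)] \<phi>(x)^(2n+1) / (2n + 1)\<close>, and expanding
  \<open>(1/(1 - x) - x)^(2n+1)\<close> binomially yields the stated sum.\<close>

unbundle fps_syntax

definition basketball_walks :: "nat \<Rightarrow> int \<Rightarrow> int list set" where
  "basketball_walks n h =
     {ys. length ys = n + 1 \<and> ys ! 0 = 0 \<and> ys ! n = h \<and>
          (\<forall>i\<in>{1..n}. ys ! i - ys ! (i - 1) \<in> {-2, -1, 1, 2}) \<and>
          (\<forall>i\<in>{1..n}. ys ! i \<ge> 1)}"

fun basketball_count :: "nat \<Rightarrow> int \<Rightarrow> nat" where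
  "basketball_count 0 h = (if h = 0 then 1 else 0)"
| "basketball_count (Suc n) h =
     (if h \<ge> 1 then \<Sum>d\<in>{-2, -1, 1, 2}. basketball_count n (h - d) else 0)"

lemma basketball_walks_0: "basketball_walks 0 h = (if h = 0 then {[0]} else {})"
proof -
  have "ys \<in> basketball_walks 0 h \<longleftrightarrow> h = 0 \<and> ys = [0]" for ys
    unfolding basketball_walks_def by (cases ys) auto
  then show ?thesis by auto
qed

lemma snoc_mem_basketball_walks_iff:
  assumes "length zs = n + 1"
  shows "zs @ [h] \<in> basketball_walks (Suc n) h' \<longleftrightarrow>
    h' = h \<and> h \<ge> 1 \<and> h - zs ! n \<in> {-2, -1, 1, 2} \<and> zs \<in> basketball_walks n (zs ! n)"
proof -
  have split: "(\<forall>i\<in>{1..Suc n}. P i) \<longleftrightarrow> (\<forall>i\<in>{1..n}. P i) \<and> P (Suc n)" for P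
    by (auto simp add: atLeastAtMostSuc_conv)
  have nth: "(zs @ [h]) ! i = zs ! i" if "i \<le> n" for i
    using that assms by (simp add: nth_append)
  have steps: "(\<forall>i\<in>{1..n}. (zs @ [h]) ! i - (zs @ [h]) ! (i - 1) \<in> S) \<longleftrightarrow>
      (\<forall>i\<in>{1..n}. zs ! i - zs ! (i - 1) \<in> S)" for S
    by (intro ball_cong) (auto simp add: nth)
  have pos: "(\<forall>i\<in>{1..n}. (zs @ [h]) ! i \<ge> 1) \<longleftrightarrow> (\<forall>i\<in>{1..n}. zs ! i \<ge> 1)"
    by (intro ball_cong) (simp_all add: nth)
  have "(zs @ [h]) ! Suc n = h"
    using assms by (simp add: nth_append)
  then show ?thesis
    using assms unfolding basketball_walks_def split mem_Collect_eq steps pos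
    by (auto simp add: nth simp del: insert_iff)
qed

lemma basketball_walks_Suc:
  "basketball_walks (Suc n) h =
     (if h \<ge> 1 then (\<lambda>zs. zs @ [h]) ` (\<Union>d\<in>{-2, -1, 1, 2}. basketball_walks n (h - d)) else {})"
  (is "?lhs = ?rhs")
proof (rule set_eqI)
  fix ys
  show "ys \<in> ?lhs \<longleftrightarrow> ys \<in> ?rhs"
  proof (cases "length ys = n + 2")
    case True
    then obtain zs y where ys: "ys = zs @ [y]" and zs: "length zs = n + 1"
      by (cases ys rule: rev_cases) auto
    have "zs \<in> (\<Union>d\<in>{-2, -1, 1, 2}. basketball_walks n (h - d)) \<longleftrightarrow>
        h - zs ! n \<in> {-2, -1, 1, 2} \<and> zs \<in> basketball_walks n (zs ! n)"
      by (auto simp: basketball_walks_def simp del: insert_iff)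
    then show ?thesis
      unfolding ys snoc_mem_basketball_walks_iff[OF zs] by auto
  next
    case False
    then show ?thesis by (auto simp: basketball_walks_def)
  qed
qed

lemma card_basketball_walks:
  "finite (basketball_walks n h) \<and> card (basketball_walks n h) = basketball_count n h"
proof (induction n arbitrary: h)
  case 0
  then show ?case by (simp add: basketball_walks_0)
next
  case (Suc n)
  let ?D = "{-2, -1, 1, 2} :: int set"
  have "card (\<Union>d\<in>?D. basketball_walks n (h - d)) = (\<Sum>d\<in>?D. card (basketball_walks n (h - d)))"
    using Suc.IH by (intro card_UN_disjoint) (auto simp: basketball_walks_def)
  moreover have "card ((\<lambda>zs. zs @ [h]) ` A) = card A" for A :: "int list set"
    by (rule card_image) (simp add: inj_on_def)
  ultimately show ?case
    using Suc.IH by (simp add: basketball_walks_Suc)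
qed

lemma second_order_recurrence_eq_0:
  fixes s :: "nat \<Rightarrow> 'a::semiring_0"
  assumes "\<And>k. s (Suc (Suc k)) = a * s (Suc k) + b * s k" and "s 0 = 0" and "s 1 = 0"
  shows "s k = 0"
proof -
  have "s k = 0 \<and> s (Suc k) = 0"
    by (induction k) (use assms in \<open>simp_all flip: One_nat_def\<close>)
  then show ?thesis ..
qed

lemma fps_inv_X_mult_inverse:
  fixes phi :: "'a::field fps"
  assumes "phi $ 0 \<noteq> 0"
  defines "E \<equiv> fps_inv (fps_X * inverse phi)"
  shows "E $ 0 = 0" and "E = fps_X * (phi oo E)"
proof -
  show E0: "E $ 0 = 0"
    by (simp add: E_def fps_inv_def)
  have "(fps_X * inverse phi) oo E = fps_X"
    unfolding E_def using assms by (intro fps_inv_right) (simp_all add: fps_X_mult_nth)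
  then have "E * inverse (phi oo E) = fps_X"
    using E0 assms by (simp add: fps_compose_mult_distrib fps_inverse_compose)
  moreover have "inverse (phi oo E) * (phi oo E) = 1"
    using E0 assms by (simp add: inverse_mult_eq_1)
  ultimately show "E = fps_X * (phi oo E)"
    by (metis mult.assoc mult_1_right)
qed

lemma fps_nth_power_minus_X:
  fixes f :: "'a::comm_ring_1 fps"
  shows "((f - fps_X) ^ N) $ m = (\<Sum>j = 0..m. (-1) ^ j * of_nat (N choose j) * (f ^ (N - j)) $ (m - j))"
proof -
  let ?a = "\<lambda>j. (-1) ^ j * of_nat (N choose j) :: 'a"
  have "(-1 :: 'a fps) = fps_const (-1)"
    by (metis fps_const_1_eq_1 fps_const_neg)
  then have "(- fps_X) ^ j = fps_const ((-1) ^ j) * (fps_X ^ j :: 'a fps)" for j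
    by (metis power_minus fps_const_power)
  then have "(f - fps_X) ^ N = (\<Sum>j\<le>N. fps_const (?a j) * (fps_X ^ j * f ^ (N - j)))"
    using binomial_ring[of "-fps_X" f N] by (simp add: ac_simps flip: fps_of_nat)
  then have "((f - fps_X) ^ N) $ m = (\<Sum>j\<le>N. ?a j * (if m < j then 0 else (f ^ (N - j)) $ (m - j)))"
    by (simp add: fps_sum_nth fps_X_power_mult_nth)
  also have "\<dots> = (\<Sum>j\<le>N + m. ?a j * (if m < j then 0 else (f ^ (N - j)) $ (m - j)))"
    by (rule sum.mono_neutral_left) (auto simp: binomial_eq_0)
  also have "\<dots> = (\<Sum>j = 0..m. ?a j * (f ^ (N - j)) $ (m - j))"
    by (rule sum.mono_neutral_cong_right) auto
  finally show ?thesis .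
qed

lemma fps_nth_geometric_power:
  "(inverse (1 - fps_X) ^ r :: 'a::field_char_0 fps) $ i = (of_nat r + of_nat i - 1) gchoose i"
proof (induction r arbitrary: i)
  case 0
  then show ?case
    by (cases i) (simp_all flip: binomial_gbinomial)
next
  case (Suc r)
  have "(inverse (1 - fps_X) ^ Suc r :: 'a fps) $ i = (\<Sum>l\<le>i. (inverse (1 - fps_X) ^ r :: 'a fps) $ l)"
    by (simp add: power_Suc2 fps_mult_nth fps_inverse_one_minus_fps_X atLeast0AtMost del: power_Suc)
  also have "\<dots> = (\<Sum>l\<le>i. (of_nat r - 1 + of_nat l) gchoose l)"
    using Suc by (simp add: algebra_simps)
  also have "\<dots> = (of_nat r - 1 + of_nat i + 1) gchoose i"
    by (rule gbinomial_parallel_sum)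
  also have "\<dots> = (of_nat (Suc r) + of_nat i - 1) gchoose i"
    by (simp add: algebra_simps)
  finally show ?case .
qed

lemma fps_compose_nth_eq_truncation:
  fixes A G :: "'a::comm_ring_1 fps"
  assumes "G $ 0 = 0" and "i \<le> n"
  shows "(A oo G) $ i = (\<Sum>j = 0..n. fps_const (A $ j) * G ^ j) $ i"
proof -
  have "(A oo G) $ i = (\<Sum>j = 0..i. A $ j * (G ^ j) $ i)"
    by (rule fps_compose_nth)
  also have "\<dots> = (\<Sum>j = 0..n. A $ j * (G ^ j) $ i)"
    using assms by (intro sum.mono_neutral_left) (auto simp: startsby_zero_power_prefix)
  finally show ?thesis
    by (simp add: fps_sum_nth)
qed

lemma lagrange_inversion_residue:
  fixes phi :: "'a::field_char_0 fps"
  assumes phi0: "phi $ 0 \<noteq> 0" and "j \<le> k"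
  shows "((fps_X * inverse phi) ^ j * fps_deriv (fps_X * inverse phi) * phi ^ Suc k) $ k =
    (if j = k then 1 else 0)"
proof -
  define r where "r = k - j"
  define psi where "psi = inverse phi"
  have psi_phi: "psi * phi = 1"
    using phi0 by (simp add: psi_def inverse_mult_eq_1)
  have deriv: "fps_deriv (fps_X * psi) * phi = 1 - fps_X * fps_deriv phi * psi"
  proof -
    have "fps_deriv psi = - fps_deriv phi * psi ^ 2"
      unfolding psi_def using phi0 by (rule fps_inverse_deriv)
    then have "fps_deriv (fps_X * psi) * phi = psi * phi - fps_X * fps_deriv phi * psi * (psi * phi)"
      by (simp add: algebra_simps power2_eq_square)
    then show ?thesis
      using psi_phi by simp
  qed
  have "phi ^ Suc k = phi ^ j * phi * phi ^ r"
    using assms(2) by (simp add: r_def flip: power_add power_Suc2)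
  then have "(fps_X * psi) ^ j * fps_deriv (fps_X * psi) * phi ^ Suc k =
      fps_X ^ j * ((1 - fps_X * fps_deriv phi * psi) * phi ^ r) * (psi * phi) ^ j"
    by (simp add: power_mult_distrib flip: deriv) (simp add: ac_simps)
  then have "((fps_X * psi) ^ j * fps_deriv (fps_X * psi) * phi ^ Suc k) $ k =
      ((1 - fps_X * fps_deriv phi * psi) * phi ^ r) $ r"
    using assms(2) psi_phi by (simp add: r_def fps_X_power_mult_nth)
  also have "\<dots> = (if r = 0 then 1 else 0)"
  proof (cases r)
    case 0
    then show ?thesis by simp
  next
    case (Suc q)
    have "of_nat (Suc q) * (phi ^ Suc q) $ Suc q = (fps_deriv (phi ^ Suc q)) $ q"
      by (simp only: fps_deriv_nth Suc_eq_plus1)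
    also have "\<dots> = of_nat (Suc q) * (fps_deriv phi * phi ^ q) $ q"
      unfolding fps_deriv_power by (simp only: diff_Suc_1 mult.assoc fps_mult_left_const_nth)
    finally have "(phi ^ Suc q) $ Suc q = (fps_deriv phi * phi ^ q) $ q"
      by (simp only: mult_cancel_left of_nat_eq_0_iff) simp
    moreover have "(1 - fps_X * fps_deriv phi * psi) * phi ^ r =
        phi ^ r - fps_X * (fps_deriv phi * phi ^ q) * (psi * phi)"
      by (simp add: Suc algebra_simps)
    ultimately show ?thesis
      using psi_phi Suc by simp
  qed
  finally show ?thesis
    using assms(2) by (simp add: r_def psi_def)
qed

lemma lagrange_inversion:
  fixes phi F :: "'a::field_char_0 fps"
  assumes phi0: "phi $ 0 \<noteq> 0"
  shows "of_nat (Suc k) * (F oo fps_inv (fps_X * inverse phi)) $ Suc k = (fps_deriv F * phi ^ Suc k) $ k"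
proof -
  define G where "G = fps_X * inverse phi"
  define A where "A = F oo fps_inv G"
  define P where "P = (\<Sum>j = 0..Suc k. fps_const (A $ j) * G ^ j)"
  have G0: "G $ 0 = 0" and G1: "G $ 1 \<noteq> 0"
    using phi0 by (simp_all add: G_def)
  have "fps_inv G $ 0 = 0"
    by (simp add: fps_inv_def)
  then have AG: "A oo G = F"
    using fps_compose_assoc[OF G0, of "fps_inv G" F] fps_inv[OF G0 G1] by (simp add: A_def)
  have "F $ i = P $ i" if "i \<le> Suc k" for i
    using fps_compose_nth_eq_truncation[OF G0 that, of A] unfolding AG P_def .
  then have "(fps_deriv F * phi ^ Suc k) $ k = (fps_deriv P * phi ^ Suc k) $ k"
    by (simp add: fps_mult_nth)
  also have "fps_deriv P * phi ^ Suc k =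
      (\<Sum>j = 0..Suc k. fps_const (A $ j * of_nat j) * (G ^ (j - 1) * fps_deriv G * phi ^ Suc k))"
    unfolding P_def fps_deriv_sum sum_distrib_right
    by (intro sum.cong) (simp_all add: fps_deriv_power ac_simps flip: fps_const_mult)
  also have "\<dots> $ k = (\<Sum>i = 0..k. A $ Suc i * of_nat (Suc i) * (G ^ i * fps_deriv G * phi ^ Suc k) $ k)"
    unfolding fps_sum_nth fps_mult_left_const_nth by (subst sum.atLeast0_atMost_Suc_shift) simp
  also have "\<dots> = A $ Suc k * of_nat (Suc k)"
    using lagrange_inversion_residue[OF phi0] by (simp add: G_def if_distrib[of "(*) _"] cong: if_cong)
  finally show ?thesis
    by (simp add: A_def G_def mult.commute)
qed

lemma lagrange_inversion_one_minus_inverse: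
  fixes psi :: "'a::field_char_0 fps"
  assumes psi0: "psi $ 0 \<noteq> 0"
  shows "((1 - inverse psi) oo fps_inv (fps_X * inverse (psi ^ 2))) $ Suc n =
    (psi ^ (2 * n + 1)) $ (n + 1) / of_nat (2 * n + 1)"
proof -
  have "psi ^ 2 $ 0 \<noteq> 0"
    using psi0 by (simp add: fps_power_zeroth)
  then have "of_nat (Suc n) * ((1 - inverse psi) oo fps_inv (fps_X * inverse (psi ^ 2))) $ Suc n =
      (fps_deriv (1 - inverse psi) * (psi ^ 2) ^ Suc n) $ n"
    by (rule lagrange_inversion)
  also have "fps_deriv (1 - inverse psi) * (psi ^ 2) ^ Suc n =
      fps_deriv psi * psi ^ (2 * n) * (inverse psi * psi) ^ 2"
  proof -
    have deriv: "fps_deriv (1 - inverse psi) = fps_deriv psi * inverse psi ^ 2"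
      using psi0 by (simp add: fps_inverse_deriv)
    have "(psi ^ 2) ^ Suc n = psi ^ (2 * n) * psi ^ 2"
      by (simp only: power_Suc2 power_mult)
    then show ?thesis
      unfolding deriv by (simp only: power_mult_distrib ac_simps)
  qed
  also have "\<dots> = fps_deriv psi * psi ^ (2 * n)"
    using psi0 by (simp add: inverse_mult_eq_1)
  also have "\<dots> = fps_const (1 / of_nat (2 * n + 1)) * fps_deriv (psi ^ (2 * n + 1))"
  proof -
    have "of_nat (2 * n + 1) \<noteq> (0 :: 'a)"
      by (simp only: of_nat_eq_0_iff)
    then have "fps_const (1 / of_nat (2 * n + 1)) * fps_const (of_nat (2 * n + 1)) = (1 :: 'a fps)"
      by simp
    then show ?thesis
      unfolding fps_deriv_power add_diff_cancel_right' by (simp only: mult.assoc[symmetric] mult_1)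
  qed
  finally have "of_nat (Suc n) * ((1 - inverse psi) oo fps_inv (fps_X * inverse (psi ^ 2))) $ Suc n =
      of_nat (Suc n) * ((psi ^ (2 * n + 1)) $ (n + 1) / of_nat (2 * n + 1))"
    by (simp only: fps_mult_left_const_nth fps_deriv_nth Suc_eq_plus1) simp
  then show ?thesis
    by (simp only: mult_cancel_left of_nat_eq_0_iff) simp
qed

definition basketball_phi :: "real fps" where
  "basketball_phi = inverse (1 - fps_X) - fps_X"

definition basketball_E :: "real fps" where
  "basketball_E = fps_inv (fps_X * inverse (basketball_phi ^ 2))"

lemma basketball_phi_0: "basketball_phi $ 0 = 1"
  by (simp add: basketball_phi_def)

lemma basketball_E_0: "basketball_E $ 0 = 0"
  using fps_inv_X_mult_inverse(1)[of "basketball_phi ^ 2"]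
  by (simp add: basketball_E_def basketball_phi_0 fps_power_zeroth)

lemma basketball_phi_compose_E:
  "basketball_phi oo basketball_E = inverse (1 - basketball_E) - basketball_E"
  using basketball_E_0 by (simp add: basketball_phi_def fps_compose_sub_distrib fps_inverse_compose)

lemma basketball_E_equation:
  "basketball_E = fps_X * (inverse (1 - basketball_E) - basketball_E) ^ 2"
  using fps_inv_X_mult_inverse(2)[of "basketball_phi ^ 2"] basketball_E_0
  by (simp add: basketball_E_def basketball_phi_0 fps_power_zeroth fps_compose_power
      flip: basketball_phi_compose_E basketball_E_def)

lemma basketball_E_inverse:
  "inverse (1 - basketball_E) * (1 - basketball_E) = 1"
  "inverse (1 - basketball_E) \<noteq> basketball_E"
proof -
  show "inverse (1 - basketball_E) * (1 - basketball_E) = 1"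
    using basketball_E_0 by (simp add: inverse_mult_eq_1)
  have "(inverse (1 - basketball_E) - basketball_E) $ 0 = 1"
    using basketball_E_0 by simp
  then show "inverse (1 - basketball_E) \<noteq> basketball_E"
    by (metis diff_self fps_zero_nth zero_neq_one)
qed

text \<open>\<open>altitude_gf (h + 1)\<close> is the generating function of the walks ending at altitude \<open>h\<close>;
  index \<open>0\<close> stands for altitude \<open>-1\<close>.\<close>

fun altitude_gf :: "nat \<Rightarrow> real fps" where
  "altitude_gf 0 = 0"
| "altitude_gf (Suc 0) = 1"
| "altitude_gf (Suc (Suc k)) =
     basketball_E * inverse (1 - basketball_E) * altitude_gf (Suc k) + basketball_E * altitude_gf k"

lemma altitude_gf_step:
  "altitude_gf (k + 2) =
     fps_X * (altitude_gf k + altitude_gf (k + 1) + altitude_gf (k + 3) + altitude_gf (k + 4))"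
proof -
  define E where "E = basketball_E"
  define I where "I = inverse (1 - E)"
  define D where "D k = altitude_gf (k + 2) -
     fps_X * (altitude_gf k + altitude_gf (k + 1) + altitude_gf (k + 3) + altitude_gf (k + 4))" for k
  have I: "I * (1 - E) = 1" and "I \<noteq> E"
    using basketball_E_inverse by (simp_all add: I_def E_def)
  have E: "E = fps_X * (I - E) ^ 2"
    using basketball_E_equation by (simp add: I_def E_def)
  have cancel: "Q = 0" if "Q * (I - E) ^ 2 = 0" for Q
    using that \<open>I \<noteq> E\<close> by simp
  have "D k = 0"
  proof (rule second_order_recurrence_eq_0)
    show "D (Suc (Suc k)) = E * I * D (Suc k) + E * D k" for k
      by (simp add: D_def E_def I_def numeral_eq_Suc algebra_simps)
    txt \<open>After clearing the denominator \<open>(I - E)\<^sup>2\<close> these are ring identities modulo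
      the relations \<open>I\<close> and \<open>E\<close>.\<close>
    show "D 0 = 0"
      by (rule cancel) (use I E in \<open>simp add: D_def numeral_eq_Suc flip: E_def I_def; algebra\<close>)
    show "D 1 = 0"
      by (rule cancel) (use I E in \<open>simp add: D_def numeral_eq_Suc flip: E_def I_def; algebra\<close>)
  qed
  then show ?thesis
    by (simp add: D_def)
qed

lemma altitude_gf_nth_0: "altitude_gf k $ 0 = (if k = 1 then 1 else 0)"
  by (induction k rule: altitude_gf.induct) (simp_all add: basketball_E_0)

lemma basketball_count_eq_altitude_gf_nth:
  "h \<ge> -1 \<Longrightarrow> real (basketball_count n h) = altitude_gf (nat (h + 1)) $ n"
proof (induction n arbitrary: h)
  case 0
  then show ?case
    by (simp add: altitude_gf_nth_0 nat_eq_iff)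
next
  case (Suc n)
  show ?case
  proof (cases "h \<ge> 1")
    case False
    with Suc.prems have "h = -1 \<or> h = 0"
      by auto
    then show ?thesis
      by auto
  next
    case True
    define k where "k = nat (h - 1)"
    have k: "nat (h + 1) = k + 2" "nat (h - 2 + 1) = k" "nat (h - 1 + 1) = k + 1"
      "nat (h + 1 + 1) = k + 3" "nat (h + 2 + 1) = k + 4"
      using True by (auto simp: k_def)
    have "altitude_gf (k + 2) $ Suc n =
        (altitude_gf k + altitude_gf (k + 1) + altitude_gf (k + 3) + altitude_gf (k + 4)) $ n"
      by (subst altitude_gf_step) simp
    also have "\<dots> = real (basketball_count (Suc n) h)"
      using True k Suc.IH[of "h - 2"] Suc.IH[of "h - 1"] Suc.IH[of "h + 1"] Suc.IH[of "h + 2"]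
      by simp
    finally show ?thesis
      using k by simp
  qed
qed

lemma fps_X_mult_altitude_gf_3:
  "fps_X * altitude_gf 3 = (1 - inverse basketball_phi) oo basketball_E"
proof -
  define E where "E = basketball_E"
  define I where "I = inverse (1 - E)"
  have I: "I * (1 - E) = 1" and "I \<noteq> E"
    using basketball_E_inverse by (simp_all add: I_def E_def)
  have E: "E = fps_X * (I - E) ^ 2"
    using basketball_E_equation by (simp add: I_def E_def)
  have "(I - E) $ 0 = 1"
    using basketball_E_0 by (simp add: I_def E_def)
  then have J: "inverse (I - E) * (I - E) = 1"
    by (simp add: inverse_mult_eq_1)
  have "(1 - inverse basketball_phi) oo E = 1 - inverse (I - E)"
    using basketball_E_0 basketball_phi_0
    by (simp add: E_def I_def fps_compose_sub_distrib fps_inverse_compose basketball_phi_compose_E)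
  moreover have "fps_X * altitude_gf 3 * (I - E) ^ 2 = (1 - inverse (I - E)) * (I - E) ^ 2"
    using I E J by (simp add: numeral_eq_Suc flip: E_def I_def; algebra)
  ultimately show ?thesis
    using \<open>I \<noteq> E\<close> by (simp add: E_def)
qed

lemma basketball_phi_power_nth:
  "(basketball_phi ^ (2 * n + 1)) $ (n + 1) =
    (\<Sum>k = 0..n + 1. (-1) ^ (n + k + 1) * real ((2 * n + 1) choose (n + k)) *
        ((real n + 2 * real k - 1) gchoose k))"
proof -
  let ?f = "\<lambda>j. (-1) ^ j * real ((2 * n + 1) choose j) *
    (inverse (1 - fps_X) ^ (2 * n + 1 - j)) $ (n + 1 - j)"
  have "(basketball_phi ^ (2 * n + 1)) $ (n + 1) = sum ?f {0..n + 1}"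
    unfolding basketball_phi_def by (rule fps_nth_power_minus_X)
  also have "\<dots> = (\<Sum>k = 0..n + 1. ?f (n + 1 - k))"
    by (subst sum.atLeastAtMost_rev) simp
  also have "\<dots> = (\<Sum>k = 0..n + 1. (-1) ^ (n + k + 1) * real ((2 * n + 1) choose (n + k)) *
        ((real n + 2 * real k - 1) gchoose k))"
  proof (rule sum.cong)
    fix k
    assume "k \<in> {0..n + 1}"
    then have k: "k \<le> n + 1"
      by simp
    have "(-1 :: real) ^ (n + 1 - k) = (-1) ^ (n + k + 1)"
      using k by (metis le_add_diff_inverse2 minus_one_power_iff odd_add)
    moreover have "(2 * n + 1) choose (n + 1 - k) = (2 * n + 1) choose (n + k)"
      using k by (subst binomial_symmetric) auto
    moreover have "(inverse (1 - fps_X) ^ (n + k) :: real fps) $ k = (real n + 2 * real k - 1) gchoose k"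
      by (simp add: fps_nth_geometric_power algebra_simps)
    moreover have "2 * n + 1 - (n + 1 - k) = n + k" and "n + 1 - (n + 1 - k) = k"
      using k by auto
    ultimately show "?f (n + 1 - k) = (-1) ^ (n + k + 1) * real ((2 * n + 1) choose (n + k)) *
        ((real n + 2 * real k - 1) gchoose k)"
      by simp
  qed simp
  finally show ?thesis .
qed

theorem proposition3p6:
  fixes n :: nat
  shows "real (card (basketball_excursion_walks n)) =
    (1 / real (2 * n + 1)) *
    (\<Sum>k = 0..n + 1. (-1) ^ (n + k + 1) * real ((2 * n + 1) choose (n + k)) *
        ((real n + 2 * real k - 1) gchoose k))"
proof -
  have "basketball_excursion_walks n = basketball_walks n 2"
    unfolding basketball_excursion_walks_def basketball_walks_def by (rule refl)
  then have "real (card (basketball_excursion_walks n)) = altitude_gf 3 $ n"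
    using card_basketball_walks[of n 2] basketball_count_eq_altitude_gf_nth[of 2 n] by simp
  also have "\<dots> = ((1 - inverse basketball_phi) oo basketball_E) $ Suc n"
    by (simp flip: fps_X_mult_altitude_gf_3)
  also have "\<dots> = (basketball_phi ^ (2 * n + 1)) $ (n + 1) / real (2 * n + 1)"
    unfolding basketball_E_def
    by (rule lagrange_inversion_one_minus_inverse) (simp add: basketball_phi_0)
  finally show ?thesis
    by (simp only: basketball_phi_power_nth times_divide_eq_left mult_1)
qed

end
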